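(* Let $\mathcal{A}(X)$ be the free transposed Poisson $3$-Lie algebra over $\mathbb{C}$ generated by a countable set $X=\{a_1,a_2,\ldots\}$. Then $\mathcal{A}(X)$ does not satisfy the identity $$S(h,y_1,y_2,x_1,x_2):=y_1[hy_2,x_1,x_2]-y_2[hy_1,x_1,x_2]+hx_1[y_1,y_2,x_2]-hx_2[y_1,y_2,x_1]=0;$$ that is, there exist $h,y_1,y_2,x_1,x_2\in\mathcal{A}(X)$ with $S(h,y_1,y_2,x_1,x_2)\neq 0$. In particular, $\mathcal{A}(X)$ is not a strong transposed Poisson $3$-Lie algebra.
   Context: A $3$-Lie algebra is a vector space with a trilinear skew-symmetric bracket satisfying $[[x_1,x_2,x_3],y_2,y_3]=\sum_{i=1}^3[x_1,\ldots,[x_i,y_2,y_3],\ldots,x_3]$. A transposed Poisson $3$-Lie algebra is a triple $(A,\cdot,[\cdot,\cdot,\cdot])$ with $(A,\cdot)$ commutative associative, $(A,[\cdot,\cdot,\cdot])$ a $3$-Lie algebra, and $3h[a_1,a_2,a_3]=[ha_1,a_2,a_3]+[a_1,ha_2,a_3]+[a_1,a_2,ha_3]$ for all $h,a_i\in A$. These algebras form a variety defined by multilinear identities; $\mathcal{A}(X)$ is the free object in this variety on $X$. A transposed Poisson $3$-Lie algebra is strong if it satisfies $S(h,y_1,y_2,x_1,x_2)=0$ identically. *)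

theory Defs
  imports Complex_Main
begin

text \<open>Terms of the signature of transposed Poisson 3-Lie algebras over the complex
numbers, with generators indexed by nat (the countable set X).\<close>

datatype tterm =
    Gen nat
  | TZero
  | TAdd tterm tterm
  | TSmul complex tterm
  | TMul tterm tterm
  | TBr tterm tterm tterm

definition TSub :: "tterm \<Rightarrow> tterm \<Rightarrow> tterm" where
  "TSub x y = TAdd x (TSmul (-1) y)"

text \<open>The free transposed Poisson 3-Lie algebra A(X) is the
quotient of tterm by this congruence; two terms denote the same element of A(X)
iff they are related by tp_eq.\<close>

inductive tp_eq :: "tterm \<Rightarrow> tterm \<Rightarrow> bool" where
  refl: "tp_eq x x"
| sym: "tp_eq x y \<Longrightarrow> tp_eq y x"
| trans: "tp_eq x y \<Longrightarrow> tp_eq y z \<Longrightarrow> tp_eq x z"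
| cong_add: "tp_eq x x' \<Longrightarrow> tp_eq y y' \<Longrightarrow> tp_eq (TAdd x y) (TAdd x' y')"
| cong_smul: "tp_eq x x' \<Longrightarrow> tp_eq (TSmul c x) (TSmul c x')"
| cong_mul: "tp_eq x x' \<Longrightarrow> tp_eq y y' \<Longrightarrow> tp_eq (TMul x y) (TMul x' y')"
| cong_br: "tp_eq x x' \<Longrightarrow> tp_eq y y' \<Longrightarrow> tp_eq z z' \<Longrightarrow>
             tp_eq (TBr x y z) (TBr x' y' z')"
| add_assoc: "tp_eq (TAdd (TAdd x y) z) (TAdd x (TAdd y z))"
| add_comm: "tp_eq (TAdd x y) (TAdd y x)"
| add_zero: "tp_eq (TAdd x TZero) x"
| add_neg: "tp_eq (TAdd x (TSmul (-1) x)) TZero"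
| smul_add: "tp_eq (TSmul c (TAdd x y)) (TAdd (TSmul c x) (TSmul c y))"
| add_smul: "tp_eq (TSmul (c + d) x) (TAdd (TSmul c x) (TSmul d x))"
| smul_smul: "tp_eq (TSmul c (TSmul d x)) (TSmul (c * d) x)"
| smul_one: "tp_eq (TSmul 1 x) x"
| mul_add: "tp_eq (TMul (TAdd x y) z) (TAdd (TMul x z) (TMul y z))"
| mul_smul: "tp_eq (TMul (TSmul c x) y) (TSmul c (TMul x y))"
| mul_comm: "tp_eq (TMul x y) (TMul y x)"
| mul_assoc: "tp_eq (TMul (TMul x y) z) (TMul x (TMul y z))"
| br_add1: "tp_eq (TBr (TAdd x x') y z) (TAdd (TBr x y z) (TBr x' y z))"
| br_add2: "tp_eq (TBr x (TAdd y y') z) (TAdd (TBr x y z) (TBr x y' z))"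
| br_add3: "tp_eq (TBr x y (TAdd z z')) (TAdd (TBr x y z) (TBr x y z'))"
| br_smul1: "tp_eq (TBr (TSmul c x) y z) (TSmul c (TBr x y z))"
| br_smul2: "tp_eq (TBr x (TSmul c y) z) (TSmul c (TBr x y z))"
| br_smul3: "tp_eq (TBr x y (TSmul c z)) (TSmul c (TBr x y z))"
| br_skew12: "tp_eq (TBr x y z) (TSmul (-1) (TBr y x z))"
| br_skew23: "tp_eq (TBr x y z) (TSmul (-1) (TBr x z y))"
| filippov: "tp_eq (TBr (TBr x1 x2 x3) y2 y3)
     (TAdd (TBr (TBr x1 y2 y3) x2 x3)
       (TAdd (TBr x1 (TBr x2 y2 y3) x3) (TBr x1 x2 (TBr x3 y2 y3))))"
| transposed: "tp_eq (TSmul 3 (TMul h (TBr a1 a2 a3)))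
     (TAdd (TBr (TMul h a1) a2 a3) (TAdd (TBr a1 (TMul h a2) a3) (TBr a1 a2 (TMul h a3))))"

definition S_term :: "tterm \<Rightarrow> tterm \<Rightarrow> tterm \<Rightarrow> tterm \<Rightarrow> tterm \<Rightarrow> tterm" where
  "S_term h y1 y2 x1 x2 =
     TAdd (TSub (TMul y1 (TBr (TMul h y2) x1 x2)) (TMul y2 (TBr (TMul h y1) x1 x2)))
          (TSub (TMul (TMul h x1) (TBr y1 y2 x2)) (TMul (TMul h x2) (TBr y1 y2 x1)))"

end

theory Submission
  imports Defs "HOL-Computational_Algebra.Polynomial"
begin

text \<open>
  A model suffices. Take the square-zero extension \<open>C[t] \<oplus> C[t]\<close> of the polynomial ring,
  with product \<open>(a, m) (b, n) = (a b, a n + m b)\<close>, and bracket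
  \<open>[(a, _), (b, _), (c, _)] = (0, W(a, b, c))\<close>, where \<open>W\<close> is the Wronskian of three
  polynomials. The Wronskian is trilinear and alternating; all iterated brackets vanish, so the
  Filippov identity holds trivially; and the Leibniz rule for derivatives gives
  \<open>W(p a, b, c) + W(a, p b, c) + W(a, b, p c) = 3 p W(a, b, c)\<close>, which is the transposed
  Poisson identity. In this model \<open>S(t, 1, t, 1, t) = (0, W(t\<^sup>2, 1, t)) = (0, 2) \<noteq> 0\<close>.
\<close>

definition wronskian3 :: "'a::idom poly \<Rightarrow> 'a poly \<Rightarrow> 'a poly \<Rightarrow> 'a poly" where
  "wronskian3 a b c =
     a * (pderiv b * pderiv (pderiv c) - pderiv c * pderiv (pderiv b))
   - b * (pderiv a * pderiv (pderiv c) - pderiv c * pderiv (pderiv a))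
   + c * (pderiv a * pderiv (pderiv b) - pderiv b * pderiv (pderiv a))"

lemma wronskian3_add:
  "wronskian3 (a + a') b c = wronskian3 a b c + wronskian3 a' b c"
  "wronskian3 a (b + b') c = wronskian3 a b c + wronskian3 a b' c"
  "wronskian3 a b (c + c') = wronskian3 a b c + wronskian3 a b c'"
  unfolding wronskian3_def by (simp_all add: pderiv_add algebra_simps)

lemma wronskian3_smult:
  "wronskian3 (smult k a) b c = smult k (wronskian3 a b c)"
  "wronskian3 a (smult k b) c = smult k (wronskian3 a b c)"
  "wronskian3 a b (smult k c) = smult k (wronskian3 a b c)"
  unfolding wronskian3_def pderiv_smult
  by (simp_all only: mult_smult_left mult_smult_right flip: smult_diff_right smult_add_right)

lemma wronskian3_swap12: "wronskian3 b a c = - wronskian3 a b c"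
  unfolding wronskian3_def by (simp add: algebra_simps)

lemma wronskian3_swap23: "wronskian3 a c b = - wronskian3 a b c"
  unfolding wronskian3_def by (simp add: algebra_simps)

lemma wronskian3_repeat13: "wronskian3 a b a = 0"
  unfolding wronskian3_def by (simp add: algebra_simps)

lemma wronskian3_repeat23: "wronskian3 a b b = 0"
  unfolding wronskian3_def by (simp add: algebra_simps)

lemma wronskian3_zero [simp]:
  "wronskian3 0 b c = 0" "wronskian3 a 0 c = 0" "wronskian3 a b 0 = 0"
  unfolding wronskian3_def by simp_all

lemma wronskian3_mult_sum:
  "wronskian3 (p * a) b c + wronskian3 a (p * b) c + wronskian3 a b (p * c)
     = 3 * p * wronskian3 a b c"
  unfolding wronskian3_def by (simp add: pderiv_mult pderiv_add algebra_simps)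

fun eval_model :: "tterm \<Rightarrow> complex poly \<times> complex poly" where
  "eval_model (Gen n) = (monom 1 n, 0)"
| "eval_model TZero = (0, 0)"
| "eval_model (TAdd x y) =
     (fst (eval_model x) + fst (eval_model y), snd (eval_model x) + snd (eval_model y))"
| "eval_model (TSmul c x) = (smult c (fst (eval_model x)), smult c (snd (eval_model x)))"
| "eval_model (TMul x y) =
     (fst (eval_model x) * fst (eval_model y),
      fst (eval_model x) * snd (eval_model y) + snd (eval_model x) * fst (eval_model y))"
| "eval_model (TBr x y z) =
     (0, wronskian3 (fst (eval_model x)) (fst (eval_model y)) (fst (eval_model z)))"

lemma tp_eq_eval_model: "tp_eq x y \<Longrightarrow> eval_model x = eval_model y"
proof (induction rule: tp_eq.induct)
  case (br_skew12 x y z)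
  show ?case by (simp add: wronskian3_swap12[of "fst (eval_model x)"])
next
  case (br_skew23 x y z)
  show ?case by (simp add: wronskian3_swap23[of _ "fst (eval_model y)"])
next
  case (transposed h a1 a2 a3)
  show ?case
    using wronskian3_mult_sum[of "fst (eval_model h)"]
    by (simp add: add.assoc numeral_poly)
qed (simp_all add: prod_eq_iff wronskian3_add wronskian3_smult smult_add_left smult_add_right
    algebra_simps)

lemma wronskian3_monom_2_1_1: "wronskian3 (monom 1 2) 1 (monom 1 1) = (2 :: 'a::idom poly)"
  unfolding wronskian3_def by (simp add: pderiv_monom monom_0 numeral_poly)

lemma eval_model_S_term_witness:
  "eval_model (S_term (Gen 1) (Gen 0) (Gen 1) (Gen 0) (Gen 1)) = (0, 2)"
  by (simp add: S_term_def TSub_def mult_monom wronskian3_monom_2_1_1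
      wronskian3_repeat13 wronskian3_repeat23 del: One_nat_def)

theorem mainTheorem8:
  shows "\<exists>h y1 y2 x1 x2. \<not> tp_eq (S_term h y1 y2 x1 x2) TZero"
proof -
  let ?S = "S_term (Gen 1) (Gen 0) (Gen 1) (Gen 0) (Gen 1)"
  have "\<not> tp_eq ?S TZero"
  proof
    assume "tp_eq ?S TZero"
    then have "eval_model ?S = eval_model TZero"
      by (rule tp_eq_eval_model)
    then show False
      unfolding eval_model_S_term_witness by simp
  qed
  then show ?thesis by blast
qed

end
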